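(* The local homeomorphism $f:D\to Y$ is a homeomorphism of $D$ onto $Y$ if and only if the auxiliary flow $\Phi$ is a global dynamical system, i.e. $D_\Phi=D\times\mathbb R$.
   Context: Standing setting: $X,Y$ are real Banach spaces, $D\subseteq X$ is a nonempty open connected set, $f:D\to Y$ is a local homeomorphism (every point has an open neighbourhood mapped homeomorphically onto an open set), $x_0\in D$, $y_0=f(x_0)$. A flow in $D$ is a map $\Phi:D_\Phi\to D$ such that: (i) $D_\Phi$ is an open subset of $D\times\mathbb R$ and $\Phi$ is continuous; (ii) for each $x\in D$, $\{t:(x,t)\in D_\Phi\}$ is an interval containing $0$; (iii) $\Phi(x,0)=x$; (iv) if $(x,t_1),(x,t_1+t_2)\in D_\Phi$ then $(\Phi(x,t_1),t_2)\in D_\Phi$ and $\Phi(\Phi(x,t_1),t_2)=\Phi(x,t_1+t_2)$. Let $\Psi(y,t)=y_0+e^{-t}(y-y_0)$ for $y\in Y,t\in\mathbb R$. The auxiliary flow $\Phi$ is the unique flow in $D$ of maximal domain with $f(\Phi(x,t))=\Psi(f(x),t)$ for all $(x,t)\in D_\Phi$; for each $x$, $t\mapsto\Phi(x,t)$ is the maximal continuous lifting by $f$ of $t\mapsto\Psi(f(x),t)$ through $x$ at $t=0$. *)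

theory Defs
  imports "HOL-Analysis.Analysis"
begin

definition local_homeomorphism_on :: "'a::topological_space set \<Rightarrow> ('a \<Rightarrow> 'b::topological_space) \<Rightarrow> bool" where
  "local_homeomorphism_on D f \<longleftrightarrow>
     (\<forall>x\<in>D. \<exists>U g. open U \<and> x \<in> U \<and> U \<subseteq> D \<and> open (f ` U) \<and> homeomorphism U (f ` U) f g)"

definition Psi :: "'b::real_normed_vector \<Rightarrow> 'b \<Rightarrow> real \<Rightarrow> 'b" where
  "Psi y0 y t = y0 + exp (- t) *\<^sub>R (y - y0)"

definition is_lifting ::
  "'a::topological_space set \<Rightarrow> ('a \<Rightarrow> 'b) \<Rightarrow> (real \<Rightarrow> 'b) \<Rightarrow> 'a \<Rightarrow> real set \<Rightarrow> (real \<Rightarrow> 'a) \<Rightarrow> bool" where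
  "is_lifting D f c x J \<gamma> \<longleftrightarrow>
     is_interval J \<and> 0 \<in> J \<and> continuous_on J \<gamma> \<and> \<gamma> ` J \<subseteq> D \<and> \<gamma> 0 = x \<and>
     (\<forall>t\<in>J. f (\<gamma> t) = c t)"

text \<open>Domain D_Phi of the auxiliary flow: for each x in D, the set of times t lies in the
  maximal interval of existence of the continuous lifting of t \<mapsto> Psi(f x, t) through x,
  i.e. the union of the domains of all such liftings.\<close>
definition aux_flow_domain :: "'a::topological_space set \<Rightarrow> ('a \<Rightarrow> 'b::real_normed_vector) \<Rightarrow> 'b \<Rightarrow> ('a \<times> real) set" where
  "aux_flow_domain D f y0 =
     {(x, t). x \<in> D \<and> (\<exists>J \<gamma>. is_lifting D f (Psi y0 (f x)) x J \<gamma> \<and> t \<in> J)}"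

end

theory Submission
  imports Defs
begin

text \<open>If \<open>f\<close> is a homeomorphism onto \<open>Y\<close>, the lifting of \<open>t \<mapsto> \<Psi>(f x, t)\<close> is simply
  \<open>f\<^sup>-\<^sup>1 \<circ> \<Psi>(f x, \<cdot>)\<close>, defined for all times. Conversely, suppose every such lifting is global,
  giving a flow \<open>\<Phi>\<close>. Liftings are unique, and a chart argument shows that \<open>\<Phi>(\<cdot>, t)\<close> is
  continuous on \<open>D\<close>. Take a chart \<open>g\<close> of \<open>f\<close> around \<open>x\<^sub>0\<close> whose image contains a ball \<open>B\<close> about
  \<open>y\<^sub>0\<close>. Since \<open>\<Psi>\<close> contracts towards \<open>y\<^sub>0\<close>, every trajectory of \<open>\<Psi>\<close> eventually stays in \<open>B\<close>, and the
  set of \<open>x\<close> whose \<open>\<Phi>\<close>-trajectory meets \<open>g(B)\<close> is open, closed in \<open>D\<close> and nonempty,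
  hence all of \<open>D\<close>. So two points with the same image are carried by \<open>\<Phi>\<close> to the same point of
  \<open>g(B)\<close> and, by uniqueness of liftings, coincide; \<open>f\<close> is onto because \<open>g(B)\<close> flows
  backwards onto all of \<open>Y\<close>. An injective surjective local homeomorphism is a homeomorphism.\<close>

section \<open>The contracting flow \<open>\<Psi>\<close>\<close>

lemma Psi_0 [simp]: "Psi y0 y 0 = y"
  by (simp add: Psi_def)

lemma Psi_Psi: "Psi y0 (Psi y0 y s) t = Psi y0 y (s + t)"
  by (simp add: Psi_def algebra_simps flip: exp_add)

lemma dist_Psi_Psi: "dist (Psi y0 a t) (Psi y0 b t) = exp (- t) * dist a b"
proof -
  have "Psi y0 a t - Psi y0 b t = exp (- t) *\<^sub>R (a - b)"
    by (simp add: Psi_def algebra_simps)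
  then show ?thesis
    by (simp add: dist_norm)
qed

lemma dist_center_Psi: "dist y0 (Psi y0 y t) = exp (- t) * dist y0 y"
  using dist_Psi_Psi[of y0 y0 t y] by (simp add: Psi_def)

lemma continuous_Psi [continuous_intros]:
  "continuous F a \<Longrightarrow> continuous F t \<Longrightarrow> continuous F (\<lambda>x. Psi y0 (a x) (t x))"
  unfolding Psi_def by (intro continuous_intros)

lemma continuous_on_Psi [continuous_intros]:
  "continuous_on S a \<Longrightarrow> continuous_on S t \<Longrightarrow> continuous_on S (\<lambda>x. Psi y0 (a x) (t x))"
  unfolding Psi_def by (intro continuous_intros)

lemma Psi_in_ball_mono:
  assumes "Psi y0 y a \<in> ball y0 r" and "a \<le> t"
  shows "Psi y0 y t \<in> ball y0 r"
proof -
  have "exp (- t) * dist y0 y \<le> exp (- a) * dist y0 y"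
    using assms(2) by (intro mult_right_mono) simp_all
  then show ?thesis
    using assms(1) by (simp add: dist_center_Psi)
qed

lemma Psi_eventually_in_ball:
  assumes "r > 0"
  obtains t where "Psi y0 y t \<in> ball y0 r"
proof
  let ?d = "dist y0 y"
  have "?d < r * (1 + ?d / r)"
    using assms by (simp add: field_simps)
  also have "\<dots> \<le> r * exp (?d / r)"
    using assms by simp
  finally have "exp (- (?d / r)) * ?d < r"
    by (simp add: exp_minus field_simps)
  then show "Psi y0 y (?d / r) \<in> ball y0 r"
    by (simp add: dist_center_Psi)
qed

section \<open>Local homeomorphisms and liftings\<close>

locale local_homeomorphism =
  fixes D :: "'a::metric_space set" and f :: "'a \<Rightarrow> 'b::metric_space"
  assumes open_D: "open D" and local_homeomorphism: "local_homeomorphism_on D f"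
begin

lemma chartE:
  assumes "x \<in> D"
  obtains U g where "open U" "x \<in> U" "U \<subseteq> D" "open (f ` U)" "homeomorphism U (f ` U) f g"
  using local_homeomorphism assms unfolding local_homeomorphism_on_def by blast

lemma continuous_on_f: "continuous_on D f"
proof -
  have "isCont f x" if "x \<in> D" for x
  proof -
    obtain U g where "open U" "x \<in> U" "homeomorphism U (f ` U) f g"
      using \<open>x \<in> D\<close> by (rule chartE)
    then show ?thesis
      by (metis continuous_on_interior homeomorphism_cont1 interior_open)
  qed
  then show ?thesis
    by (simp add: continuous_at_imp_continuous_on)
qed

lemma open_image:
  assumes "open V" "V \<subseteq> D"
  shows "open (f ` V)"
proof -
  have "\<exists>W. open W \<and> f x \<in> W \<and> W \<subseteq> f ` V" if "x \<in> V" for x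
  proof -
    have "x \<in> D"
      using \<open>x \<in> V\<close> assms(2) by blast
    then obtain U g where U: "open U" "x \<in> U" "open (f ` U)" "homeomorphism U (f ` U) f g"
      by (rule chartE)
    have "openin (top_of_set (f ` U)) (f ` (U \<inter> V))"
      using U assms(1) by (intro homeomorphism_imp_open_map[OF U(4)]) (simp add: openin_open_Int)
    then have "open (f ` (U \<inter> V))"
      using U(3) openin_open_trans by blast
    then show ?thesis
      using U(2) \<open>x \<in> V\<close> by blast
  qed
  then show ?thesis
    by (subst open_subopen) blast
qed

lemma homeomorphism_if_bij:
  assumes "inj_on f D" and "f ` D = UNIV"
  shows "\<exists>g. homeomorphism D UNIV f g"
proof -
  have "openin (top_of_set UNIV) (f ` V)" if "openin (top_of_set D) V" for V
    using that open_D open_image by (simp add: openin_open_eq openin_subset)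
  then show ?thesis
    using homeomorphism_injective_open_map[OF continuous_on_f assms(2,1)] by metis
qed

lemma lifting_unique:
  assumes I: "connected I" and cont: "continuous_on I \<gamma>1" "continuous_on I \<gamma>2"
    and in_D: "\<gamma>1 ` I \<subseteq> D" "\<gamma>2 ` I \<subseteq> D"
    and same_image: "\<And>t. t \<in> I \<Longrightarrow> f (\<gamma>1 t) = f (\<gamma>2 t)"
    and t0: "t0 \<in> I" "\<gamma>1 t0 = \<gamma>2 t0" and t: "t \<in> I"
  shows "\<gamma>1 t = \<gamma>2 t"
proof -
  let ?E = "{s \<in> I. \<gamma>1 s = \<gamma>2 s}"
  have "closedin (top_of_set I) ?E"
    using closedin_continuous_maps_eq[of euclidean "top_of_set I" \<gamma>1 \<gamma>2] cont by simp
  moreover have "openin (top_of_set I) ?E"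
  proof (subst openin_subopen, intro ballI)
    fix s assume s: "s \<in> ?E"
    then have "\<gamma>1 s \<in> D"
      using in_D by blast
    then obtain U g where U: "open U" "\<gamma>1 s \<in> U" "homeomorphism U (f ` U) f g"
      by (rule chartE)
    let ?S = "I \<inter> \<gamma>1 -` U \<inter> (I \<inter> \<gamma>2 -` U)"
    have "openin (top_of_set I) ?S"
      using continuous_openin_preimage_gen[OF cont(1) U(1)]
        continuous_openin_preimage_gen[OF cont(2) U(1)] by (rule openin_Int)
    moreover have "s \<in> ?S"
      using s U(2) by simp
    moreover have "?S \<subseteq> ?E"
    proof
      fix r assume r: "r \<in> ?S"
      then have "\<gamma>1 r = g (f (\<gamma>1 r))" "\<gamma>2 r = g (f (\<gamma>2 r))"
        using U(3) by (simp_all add: homeomorphism_apply1)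
      with r same_image show "r \<in> ?E"
        by simp
    qed
    ultimately show "\<exists>T. openin (top_of_set I) T \<and> s \<in> T \<and> T \<subseteq> ?E"
      by blast
  qed
  ultimately have "?E = I"
    using t0 I connected_clopen by blast
  then show ?thesis
    using t by blast
qed

lemma liftings_agree:
  assumes "is_lifting D f c x J1 \<gamma>1" "is_lifting D f c x J2 \<gamma>2" "t \<in> J1" "t \<in> J2"
  shows "\<gamma>1 t = \<gamma>2 t"
proof (rule lifting_unique[of "J1 \<inter> J2" _ _ 0])
  show "connected (J1 \<inter> J2)"
    using assms(1,2) by (simp add: is_lifting_def is_interval_Int is_interval_connected)
qed (use assms in \<open>auto simp: is_lifting_def intro: continuous_on_subset\<close>)

lemma lifting_UNIV_if_all_times_covered:
  assumes "\<And>t. \<exists>J \<gamma>. is_lifting D f c x J \<gamma> \<and> t \<in> J"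
  shows "\<exists>\<gamma>. is_lifting D f c x UNIV \<gamma>"
proof -
  obtain J \<Gamma> where \<Gamma>: "\<And>t. is_lifting D f c x (J t) (\<Gamma> t)" "\<And>t. t \<in> J t"
    using assms by metis
  define G where "G t = \<Gamma> t t" for t
  have G_eq: "G s = \<Gamma> t s" if "s \<in> J t" for s t
    unfolding G_def using liftings_agree[OF \<Gamma>(1) \<Gamma>(1) \<Gamma>(2) that] .
  have ivl: "{a..b} \<subseteq> J t" if "a \<in> J t" "b \<in> J t" for a b t
    using \<Gamma>(1)[of t] that by (auto simp: is_lifting_def intro: mem_is_interval_1_I)
  have zero: "0 \<in> J t" for t
    using \<Gamma>(1)[of t] by (simp add: is_lifting_def)
  have cont: "continuous_on {a..b} G" if "a \<in> J t" "b \<in> J t" for a b t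
  proof (rule continuous_on_eq)
    show "continuous_on {a..b} (\<Gamma> t)"
      using \<Gamma>(1)[of t] ivl[OF that] by (auto simp: is_lifting_def intro: continuous_on_subset)
  qed (use G_eq ivl[OF that] in auto)
  have "continuous_on ({-b..0} \<union> {0..b}) G" for b
    using cont[OF \<Gamma>(2) zero, of "-b"] cont[OF zero \<Gamma>(2), of b]
    by (intro continuous_on_closed_Un) auto
  moreover have "{-b..0} \<union> {0..b} = {-b..b}" if "b \<ge> 0" for b :: real
    using that by auto
  ultimately have around: "continuous_on {-(\<bar>t\<bar> + 1)..\<bar>t\<bar> + 1} G" for t
    by (metis abs_ge_zero add_nonneg_nonneg zero_le_one)
  have "isCont G t" for t
    by (rule continuous_on_interior[OF around[of t]]) auto
  then have "continuous_on UNIV G"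
    by (simp add: continuous_at_imp_continuous_on)
  moreover have "G t \<in> D" "f (G t) = c t" for t
    using \<Gamma> unfolding G_def is_lifting_def by blast+
  moreover have "G 0 = x"
    using G_eq[OF zero] \<Gamma>(1) by (simp add: is_lifting_def)
  ultimately show ?thesis
    unfolding is_lifting_def by blast
qed

end

section \<open>The auxiliary flow when all liftings are global\<close>

locale complete_aux_flow = local_homeomorphism D f
  for D :: "'a::metric_space set" and f :: "'a \<Rightarrow> 'b::real_normed_vector" +
  fixes y0 :: 'b
  assumes lifting_UNIV_exists: "x \<in> D \<Longrightarrow> \<exists>\<gamma>. is_lifting D f (Psi y0 (f x)) x UNIV \<gamma>"
begin

text \<open>\<open>flow x t\<close> is \<open>\<Phi>(x, t)\<close>; by uniqueness of liftings the choice is immaterial.\<close>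

definition flow :: "'a \<Rightarrow> real \<Rightarrow> 'a" where
  "flow x = (SOME \<gamma>. is_lifting D f (Psi y0 (f x)) x UNIV \<gamma>)"

lemma is_lifting_flow:
  assumes "x \<in> D"
  shows "is_lifting D f (Psi y0 (f x)) x UNIV (flow x)"
  unfolding flow_def using lifting_UNIV_exists[OF assms] by (rule someI_ex)

lemma
  assumes "x \<in> D"
  shows flow_in_D: "flow x t \<in> D"
    and flow_0 [simp]: "flow x 0 = x"
    and f_flow [simp]: "f (flow x t) = Psi y0 (f x) t"
    and continuous_on_flow_time: "continuous_on S (flow x)"
  using is_lifting_flow[OF assms] unfolding is_lifting_def
  by (blast, simp, simp, meson continuous_on_subset subset_UNIV)

lemma flow_eq_lifting:
  assumes "x \<in> D" and "connected I" and "continuous_on I \<gamma>" and "\<gamma> ` I \<subseteq> D"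
    and "\<And>t. t \<in> I \<Longrightarrow> f (\<gamma> t) = Psi y0 (f x) t"
    and "t0 \<in> I" "\<gamma> t0 = flow x t0" and "t \<in> I"
  shows "flow x t = \<gamma> t"
proof (rule lifting_unique[of I "flow x" \<gamma> t0 t])
  show "flow x ` I \<subseteq> D"
    using flow_in_D[OF assms(1)] by blast
  show "f (flow x s) = f (\<gamma> s)" if "s \<in> I" for s
    using assms(1,5) that by simp
qed (use assms continuous_on_flow_time in auto)

lemma flow_eq_local_inverse:
  assumes x: "x \<in> D" and U: "U \<subseteq> D" "homeomorphism U (f ` U) f g"
    and I: "connected I" and in_chart: "\<And>\<tau>. \<tau> \<in> I \<Longrightarrow> Psi y0 (f x) \<tau> \<in> f ` U"
    and t0: "t0 \<in> I" "flow x t0 \<in> U" and t: "t \<in> I"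
  shows "flow x t = g (Psi y0 (f x) t)"
proof (rule flow_eq_lifting[OF x I _ _ _ t0(1) _ t])
  show "continuous_on I (\<lambda>\<tau>. g (Psi y0 (f x) \<tau>))"
    using in_chart
    by (intro continuous_on_compose2[OF homeomorphism_cont2[OF U(2)]] continuous_on_Psi
        continuous_on_const continuous_on_id) auto
  have "g ` f ` U \<subseteq> D"
    using U homeomorphism_image2 by metis
  then show "(\<lambda>\<tau>. g (Psi y0 (f x) \<tau>)) ` I \<subseteq> D"
    using in_chart by auto
  show "f (g (Psi y0 (f x) \<tau>)) = Psi y0 (f x) \<tau>" if "\<tau> \<in> I" for \<tau>
    using homeomorphism_apply2[OF U(2) in_chart[OF that]] .
  show "g (Psi y0 (f x) t0) = flow x t0"
    using homeomorphism_apply1[OF U(2) t0(2)] x by simp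
qed

lemma chart_along_nearby_trajectories:
  assumes x: "x \<in> D"
  obtains U g \<delta> \<epsilon> where "open U" "U \<subseteq> D" "open (f ` U)" "homeomorphism U (f ` U) f g"
    "flow x T \<in> U" "\<delta> > 0" "\<epsilon> > 0"
    "\<forall>x' \<tau>. dist (f x') (f x) < \<epsilon> \<and> \<tau> \<in> ball T \<delta> \<longrightarrow> Psi y0 (f x') \<tau> \<in> f ` U"
proof -
  let ?p = "Psi y0 (f x)"
  obtain U g where U: "open U" "flow x T \<in> U" "U \<subseteq> D" "open (f ` U)" "homeomorphism U (f ` U) f g"
    using flow_in_D[OF x] by (rule chartE)
  have "?p T \<in> f ` U"
    using U(2) x by (metis f_flow image_eqI)
  then obtain \<rho> where \<rho>: "\<rho> > 0" "ball (?p T) \<rho> \<subseteq> f ` U"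
    by (rule openE[OF U(4)])
  have "isCont ?p T"
    by (intro continuous_Psi continuous_const continuous_ident)
  then have "eventually (\<lambda>\<tau>. dist (?p \<tau>) (?p T) < \<rho> / 2) (at T)"
    using \<rho>(1) unfolding isCont_def by (intro tendstoD) simp_all
  then obtain \<delta>0 where \<delta>0: "\<delta>0 > 0" "\<And>\<tau>. dist \<tau> T < \<delta>0 \<Longrightarrow> dist (?p \<tau>) (?p T) < \<rho> / 2"
    unfolding eventually_at by (metis UNIV_I dist_self \<rho>(1) half_gt_zero)
  define \<delta> where "\<delta> = min \<delta>0 1"
  \<comment> \<open>on the window \<open>ball T \<delta>\<close> the factor \<open>exp (- \<tau>)\<close> of \<open>dist_Psi_Psi\<close> is at most \<open>exp (\<bar>T\<bar> + 1)\<close>\<close>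
  define \<epsilon> where "\<epsilon> = \<rho> / 2 / exp (\<bar>T\<bar> + 1)"
  have "Psi y0 (f x') \<tau> \<in> f ` U" if "dist (f x') (f x) < \<epsilon>" "\<tau> \<in> ball T \<delta>" for x' \<tau>
  proof -
    have "exp (- \<tau>) \<le> exp (\<bar>T\<bar> + 1)"
      using that(2) by (auto simp: \<delta>_def dist_real_def)
    then have "dist (?p \<tau>) (Psi y0 (f x') \<tau>) \<le> exp (\<bar>T\<bar> + 1) * dist (f x) (f x')"
      by (simp add: dist_Psi_Psi mult_right_mono)
    also have "\<dots> < \<rho> / 2"
      using that(1) by (simp add: \<epsilon>_def dist_commute field_simps)
    moreover have "dist (?p T) (?p \<tau>) < \<rho> / 2"
      using \<delta>0(2)[of \<tau>] that(2) by (simp add: \<delta>_def dist_commute)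
    ultimately have "dist (?p T) (Psi y0 (f x') \<tau>) < \<rho>"
      using dist_triangle[of "?p T" "Psi y0 (f x') \<tau>" "?p \<tau>"] by linarith
    then show ?thesis
      using \<rho>(2) by auto
  qed
  moreover have "\<delta> > 0" "\<epsilon> > 0"
    using \<delta>0(1) \<rho>(1) by (simp_all add: \<delta>_def \<epsilon>_def)
  ultimately show ?thesis
    using that[OF U(1,3,4,5,2)] by blast
qed

lemma flow_continuity_spreads:
  assumes x: "x \<in> D"
  shows "\<exists>\<delta>>0. \<forall>T'\<in>ball T \<delta>. \<forall>s\<in>ball T \<delta>.
    continuous (at x within D) (\<lambda>x'. flow x' T') \<longrightarrow> continuous (at x within D) (\<lambda>x'. flow x' s)"
proof -
  let ?p = "Psi y0 (f x)"
  obtain U g \<delta> \<epsilon> where U: "open U" "U \<subseteq> D" "open (f ` U)" "homeomorphism U (f ` U) f g"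
    "flow x T \<in> U" and "\<delta> > 0" "\<epsilon> > 0"
    and in_chart: "\<forall>x' \<tau>. dist (f x') (f x) < \<epsilon> \<and> \<tau> \<in> ball T \<delta> \<longrightarrow> Psi y0 (f x') \<tau> \<in> f ` U"
    by (rule chart_along_nearby_trajectories[OF x])
  have on_chart: "flow x' s = g (Psi y0 (f x') s)"
    if "x' \<in> D" "dist (f x') (f x) < \<epsilon>" "T' \<in> ball T \<delta>" "s \<in> ball T \<delta>" "flow x' T' \<in> U"
    for x' T' s
    using that in_chart by (intro flow_eq_local_inverse[OF _ U(2,4), where I = "ball T \<delta>"]) auto
  have "T \<in> ball T \<delta>"
    using \<open>\<delta> > 0\<close> by simp
  have f_continuous: "continuous (at x within D) f"
    using continuous_on_f x continuous_on_eq_continuous_within by blast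
  show ?thesis
  proof (intro exI[of _ \<delta>] conjI \<open>\<delta> > 0\<close> ballI impI)
    fix T' s assume T': "T' \<in> ball T \<delta>" and s: "s \<in> ball T \<delta>"
      and continuous_T': "continuous (at x within D) (\<lambda>x'. flow x' T')"
    have "flow x T' = g (?p T')"
      using on_chart[OF x _ \<open>T \<in> ball T \<delta>\<close> T' U(5)] \<open>\<epsilon> > 0\<close> by simp
    moreover have "?p T' \<in> f ` U"
      using in_chart T' \<open>\<epsilon> > 0\<close> by simp
    ultimately have "flow x T' \<in> U"
      using homeomorphism_image2[OF U(4)] by blast
    then have "eventually (\<lambda>x'. flow x' T' \<in> U) (at x within D)"
      using topological_tendstoD[OF continuous_T'[unfolded continuous_within] U(1)] by simp
    moreover have "eventually (\<lambda>x'. dist (f x') (f x) < \<epsilon>) (at x within D)"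
      using tendstoD[OF f_continuous[unfolded continuous_within] \<open>\<epsilon> > 0\<close>] .
    moreover have "eventually (\<lambda>x'. x' \<in> D) (at x within D)"
      by (simp add: eventually_at_filter)
    ultimately have transform: "eventually (\<lambda>x'. g (Psi y0 (f x') s) = flow x' s) (at x within D)"
    proof eventually_elim
      case (elim x')
      then show ?case
        using on_chart[of x' T' s] T' s by simp
    qed
    moreover have "isCont g (?p s)"
      using continuous_on_interior[OF homeomorphism_cont2[OF U(4)]] U(3) in_chart s
        \<open>\<epsilon> > 0\<close> by (simp add: interior_open)
    then have "continuous (at x within D) (\<lambda>x'. g (Psi y0 (f x') s))"
      by (rule continuous_within_compose3) (intro continuous_Psi f_continuous continuous_const)
    moreover have "g (?p s) = flow x s"
      using on_chart[OF x _ \<open>T \<in> ball T \<delta>\<close> s U(5)] \<open>\<epsilon> > 0\<close> by simp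
    ultimately have "((\<lambda>x'. g (Psi y0 (f x') s)) \<longlongrightarrow> flow x s) (at x within D)"
      by (simp add: continuous_within)
    then show "continuous (at x within D) (\<lambda>x'. flow x' s)"
      unfolding continuous_within by (rule Lim_transform_eventually[OF _ transform])
  qed
qed

lemma continuous_on_flow_space: "continuous_on D (\<lambda>x. flow x t)"
  unfolding continuous_on_eq_continuous_within
proof
  fix x assume x: "x \<in> D"
  have "continuous_on D (\<lambda>x. flow x 0)"
    by (rule continuous_on_eq[OF continuous_on_id]) simp
  then have "continuous (at x within D) (\<lambda>x'. flow x' 0)"
    using x continuous_on_eq_continuous_within by blast
  then show "continuous (at x within D) (\<lambda>x'. flow x' t)"
  proof (rule connected_induction_simple[OF connected_UNIV, of 0 t, rotated 2])
    fix T :: real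
    obtain \<delta> where \<delta>: "\<delta> > 0" "\<forall>T'\<in>ball T \<delta>. \<forall>s\<in>ball T \<delta>.
        continuous (at x within D) (\<lambda>x'. flow x' T') \<longrightarrow> continuous (at x within D) (\<lambda>x'. flow x' s)"
      using flow_continuity_spreads[OF x, of T] by blast
    have "openin (top_of_set UNIV) (ball T \<delta>)" "T \<in> ball T \<delta>"
      using \<delta>(1) by simp_all
    with \<delta>(2) show "\<exists>B. openin (top_of_set UNIV) B \<and> T \<in> B \<and> (\<forall>T'\<in>B. \<forall>s\<in>B.
        continuous (at x within D) (\<lambda>x'. flow x' T') \<longrightarrow> continuous (at x within D) (\<lambda>x'. flow x' s))"
      by blast
  qed (rule UNIV_I)+
qed

lemma eq_if_flow_eq:
  assumes "a \<in> D" "b \<in> D" "f a = f b" "flow a t = flow b t"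
  shows "a = b"
proof -
  have "flow a 0 = flow b 0"
    using assms flow_in_D continuous_on_flow_time
    by (intro flow_eq_lifting[OF assms(1) connected_UNIV, of "flow b" t]) auto
  then show ?thesis
    using assms by simp
qed

section \<open>Trajectories through a chart at the centre\<close>

context
  fixes U g r
  assumes U: "open U" "U \<subseteq> D" "homeomorphism U (f ` U) f g"
    and r: "r > 0" "ball y0 r \<subseteq> f ` U"
begin

lemma image_D_eq_UNIV: "f ` D = UNIV"
proof -
  have "y \<in> f ` D" for y
  proof -
    obtain t where t: "Psi y0 y t \<in> ball y0 r"
      using r(1) by (rule Psi_eventually_in_ball)
    define u where "u = g (Psi y0 y t)"
    have "u \<in> D" "f u = Psi y0 y t"
      using t r(2) U homeomorphism_image2[OF U(3)] homeomorphism_apply2[OF U(3)]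
      unfolding u_def by blast+
    then have "f (flow u (- t)) = y"
      by (simp add: Psi_Psi)
    with \<open>u \<in> D\<close> show ?thesis
      using flow_in_D by blast
  qed
  then show ?thesis
    by blast
qed

lemma flow_eq_local_inverse_after:
  assumes x: "x \<in> D" and s: "flow x s \<in> U" "a \<le> s" and a: "Psi y0 (f x) a \<in> ball y0 r"
    and t: "a \<le> t"
  shows "flow x t = g (Psi y0 (f x) t)"
proof (rule flow_eq_local_inverse[OF x U(2,3) connected_Ici[of a]])
  show "Psi y0 (f x) \<tau> \<in> f ` U" if "\<tau> \<in> {a..}" for \<tau>
    using Psi_in_ball_mono[OF a] that r(2) by auto
qed (use s t in auto)

lemma enters_chart_iff:
  assumes x: "x \<in> D" and t: "Psi y0 (f x) t \<in> ball y0 r"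
  shows "(\<exists>s. Psi y0 (f x) s \<in> ball y0 r \<and> flow x s \<in> U) \<longleftrightarrow> flow x t \<in> U"
proof
  assume "\<exists>s. Psi y0 (f x) s \<in> ball y0 r \<and> flow x s \<in> U"
  then obtain s where s: "Psi y0 (f x) s \<in> ball y0 r" "flow x s \<in> U"
    by blast
  have "Psi y0 (f x) (min s t) \<in> ball y0 r"
    using s(1) t by (simp add: min_def)
  then have "flow x t = g (Psi y0 (f x) t)"
    by (rule flow_eq_local_inverse_after[OF x s(2) min.cobounded1 _ min.cobounded2])
  moreover have "g (Psi y0 (f x) t) \<in> U"
    using t r(2) homeomorphism_image2[OF U(3)] by blast
  ultimately show "flow x t \<in> U"
    by simp
qed (use t in blast)

text \<open>Over the ball, \<open>g \<circ> f\<close> fixes exactly the points of \<open>U\<close>.\<close>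

lemma open_off_chart: "open {u \<in> D. f u \<in> ball y0 r \<and> g (f u) \<noteq> u}"
proof -
  let ?S = "D \<inter> f -` ball y0 r"
  have "open ?S"
    using continuous_open_preimage[OF continuous_on_f open_D open_ball] .
  have "continuous_on ?S (\<lambda>u. g (f u))"
    by (rule continuous_on_compose2[OF homeomorphism_cont2[OF U(3)]
          continuous_on_subset[OF continuous_on_f]]) (use r(2) in auto)
  then have "closedin (top_of_set ?S) {u \<in> ?S. g (f u) = u}"
    using closedin_continuous_maps_eq[of euclidean "top_of_set ?S" "\<lambda>u. g (f u)" "\<lambda>u. u"]
    by simp
  then have "openin (top_of_set ?S) (?S - {u \<in> ?S. g (f u) = u})"
    by (rule openin_diff[OF openin_subtopology_self])
  moreover have "?S - {u \<in> ?S. g (f u) = u} = {u \<in> D. f u \<in> ball y0 r \<and> g (f u) \<noteq> u}"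
    by auto
  ultimately have "openin (top_of_set ?S) {u \<in> D. f u \<in> ball y0 r \<and> g (f u) \<noteq> u}"
    by simp
  then show ?thesis
    using \<open>open ?S\<close> by (rule openin_open_trans)
qed

lemma open_entering_chart: "open {x \<in> D. \<exists>s. Psi y0 (f x) s \<in> ball y0 r \<and> flow x s \<in> U}"
proof -
  have "open (U \<inter> f -` ball y0 r)"
    using continuous_open_preimage[OF continuous_on_subset[OF continuous_on_f U(2)] U(1) open_ball] .
  moreover have "{x \<in> D. \<exists>s. Psi y0 (f x) s \<in> ball y0 r \<and> flow x s \<in> U} =
      (\<Union>s. D \<inter> (\<lambda>x. flow x s) -` (U \<inter> f -` ball y0 r))"
    by auto
  ultimately show ?thesis
    by (simp only:) (intro open_UN ballI continuous_open_preimage[OF continuous_on_flow_space open_D])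
qed

lemma open_not_entering_chart: "open {x \<in> D. \<nexists>s. Psi y0 (f x) s \<in> ball y0 r \<and> flow x s \<in> U}"
  (is "open ?C")
proof (subst open_subopen, intro ballI)
  fix x assume x: "x \<in> ?C"
  obtain t where t: "Psi y0 (f x) t \<in> ball y0 r"
    using r(1) by (rule Psi_eventually_in_ball)
  let ?W = "{u \<in> D. f u \<in> ball y0 r \<and> g (f u) \<noteq> u}"
  let ?N = "D \<inter> (\<lambda>x. flow x t) -` ?W"
  have "open ?N"
    using continuous_open_preimage[OF continuous_on_flow_space open_D open_off_chart] .
  moreover have "x \<in> ?N"
  proof -
    have "flow x t \<notin> U"
      using x enters_chart_iff[OF _ t] by auto
    moreover have "g (Psi y0 (f x) t) \<in> U"
      using t r(2) homeomorphism_image2[OF U(3)] by blast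
    then have "g (f (flow x t)) \<in> U"
      using x by simp
    ultimately show ?thesis
      using x t flow_in_D by auto
  qed
  moreover have "?N \<subseteq> ?C"
  proof
    fix x' assume x': "x' \<in> ?N"
    then have "flow x' t \<notin> U" "Psi y0 (f x') t \<in> ball y0 r"
      using homeomorphism_apply1[OF U(3)] by auto
    then show "x' \<in> ?C"
      using x' enters_chart_iff[of x' t] by auto
  qed
  ultimately show "\<exists>T. open T \<and> x \<in> T \<and> T \<subseteq> ?C"
    by blast
qed

lemma every_orbit_enters_chart:
  assumes "connected D" and "x \<in> D"
  shows "\<exists>s. Psi y0 (f x) s \<in> ball y0 r \<and> flow x s \<in> U"
proof -
  let ?C = "{x \<in> D. \<exists>s. Psi y0 (f x) s \<in> ball y0 r \<and> flow x s \<in> U}"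
  have "y0 \<in> f ` U"
    using r by auto
  then have "g y0 \<in> U" "f (g y0) = y0"
    using homeomorphism_image2[OF U(3)] homeomorphism_apply2[OF U(3)] by auto
  then have "g y0 \<in> ?C"
    using U(2) r(1) by (auto intro!: exI[of _ 0])
  moreover have "?C \<inter> D = {} \<or> {x \<in> D. \<nexists>s. Psi y0 (f x) s \<in> ball y0 r \<and> flow x s \<in> U} \<inter> D = {}"
    by (rule connectedD[OF assms(1) open_entering_chart open_not_entering_chart]) auto
  ultimately show ?thesis
    using assms(2) by auto
qed

lemma inj_on_f_if_connected:
  assumes "connected D"
  shows "inj_on f D"
proof (rule inj_onI)
  fix a b assume a: "a \<in> D" and b: "b \<in> D" and ab: "f a = f b"
  obtain t where t: "Psi y0 (f a) t \<in> ball y0 r"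
    using r(1) by (rule Psi_eventually_in_ball)
  have "flow a t \<in> U" "flow b t \<in> U"
    using enters_chart_iff[OF a t] enters_chart_iff[OF b] t ab
      every_orbit_enters_chart[OF assms a] every_orbit_enters_chart[OF assms b] by auto
  then have "flow a t = flow b t"
    using homeomorphism_apply1[OF U(3)] a b ab by (metis f_flow)
  then show "a = b"
    using eq_if_flow_eq a b ab by blast
qed

end

lemma homeomorphism_if_connected:
  assumes "connected D" and "y0 \<in> f ` D"
  shows "\<exists>h. homeomorphism D UNIV f h"
proof -
  obtain x0 where x0: "x0 \<in> D" "f x0 = y0"
    using assms(2) by blast
  obtain U g where U: "open U" "x0 \<in> U" "U \<subseteq> D" "open (f ` U)" "homeomorphism U (f ` U) f g"
    using x0(1) by (rule chartE)
  have "y0 \<in> f ` U"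
    using U(2) x0(2) by blast
  then obtain r where r: "r > 0" "ball y0 r \<subseteq> f ` U"
    by (rule openE[OF U(4)])
  show ?thesis
    using homeomorphism_if_bij[OF inj_on_f_if_connected[OF U(1,3,5) r assms(1)]
        image_D_eq_UNIV[OF U(1,3,5) r]] .
qed

end

lemma aux_flow_domain_if_homeomorphism:
  fixes f :: "'a::topological_space \<Rightarrow> 'b::real_normed_vector"
  assumes "homeomorphism D UNIV f g"
  shows "aux_flow_domain D f y0 = D \<times> UNIV"
proof -
  have "is_lifting D f (Psi y0 (f x)) x UNIV (\<lambda>t. g (Psi y0 (f x) t))" if "x \<in> D" for x
  proof -
    have "continuous_on UNIV (\<lambda>t. g (Psi y0 (f x) t))"
      by (rule continuous_on_compose2[OF homeomorphism_cont2[OF assms]])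
        (intro continuous_on_Psi continuous_on_const continuous_on_id, simp)
    then show ?thesis
      using that homeomorphism_image2[OF assms] homeomorphism_apply1[OF assms]
        homeomorphism_apply2[OF assms]
      unfolding is_lifting_def by auto
  qed
  then show ?thesis
    unfolding aux_flow_domain_def by fastforce
qed

theorem proposition2p2:
  fixes f :: "'a::banach \<Rightarrow> 'b::banach" and D :: "'a set" and x0 :: 'a
  assumes "open D" and "connected D" and "D \<noteq> {}"
    and "local_homeomorphism_on D f"
    and "x0 \<in> D"
  shows "(\<exists>g. homeomorphism D UNIV f g) \<longleftrightarrow> aux_flow_domain D f (f x0) = D \<times> UNIV"
proof
  assume "\<exists>g. homeomorphism D UNIV f g"
  then show "aux_flow_domain D f (f x0) = D \<times> UNIV"
    using aux_flow_domain_if_homeomorphism by blast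
next
  assume complete: "aux_flow_domain D f (f x0) = D \<times> UNIV"
  interpret local_homeomorphism D f
    using assms(1,4) by unfold_locales
  interpret complete_aux_flow D f "f x0"
  proof
    fix x assume "x \<in> D"
    then have "\<exists>J \<gamma>. is_lifting D f (Psi (f x0) (f x)) x J \<gamma> \<and> t \<in> J" for t
      using complete unfolding aux_flow_domain_def by blast
    then show "\<exists>\<gamma>. is_lifting D f (Psi (f x0) (f x)) x UNIV \<gamma>"
      by (rule lifting_UNIV_if_all_times_covered)
  qed
  show "\<exists>g. homeomorphism D UNIV f g"
    using homeomorphism_if_connected assms(2,5) by blast
qed

end
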